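(* Let $X\in\mathbb{R}^{m\times n}$, $\lambda>0$, and let $f:\mathbb{R}^{m\times n}\to\mathbb{R}$ be an arbitrary function. Consider the original R-PCA problem $$\min_{A,E\in\mathbb{R}^{m\times n}} \operatorname{rank}(A)+\lambda f(E)\quad\text{s.t.}\quad X=A+E, \tag{P}$$ and the original R-LatLRR problem $$\min_{Z\in\mathbb{R}^{n\times n},\,L\in\mathbb{R}^{m\times m},\,E\in\mathbb{R}^{m\times n}} \operatorname{rank}(Z)+\operatorname{rank}(L)+\lambda f(E)\quad\text{s.t.}\quad X-E=(X-E)Z+L(X-E). \tag{T}$$ (i) Let $(A^*,E^* )$ be any optimal solution of (P), let $r=\operatorname{rank}(A^* )$, and let $A^*=U_{A^*}\Sigma_{A^*}V_{A^*}^T$ be its skinny SVD. Let $\widetilde W\in\mathbb{R}^{r\times r}$ be any idempotent matrix ($\widetilde W^2=\widetilde W$), and let $S_1\in\mathbb{R}^{n\times r}$, $S_2\in\mathbb{R}^{r\times m}$ be any matrices satisfying $V_{A^*}^TS_1=0$, $S_2U_{A^*}=0$, $\operatorname{rank}(S_1)\le\operatorname{rank}(\widetilde W)$ and $\operatorname{rank}(S_2)\le\operatorname{rank}(I-\widetilde W)$. Then $(Z^*,L^*,E^* )$ is a minimizer of (T), where $$Z^*=V_{A^*}\widetilde WV_{A^*}^T+S_1\widetilde WV_{A^*}^T,\qquad L^*=U_{A^*}\Sigma_{A^*}(I-\widetilde W)\Sigma_{A^*}^{-1}U_{A^*}^T+U_{A^*}\Sigma_{A^*}(I-\widetilde W)S_2.$$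 (ii) Conversely, if $(Z^*,L^*,E^* )$ is any optimal solution of (T), then $(X-E^*,E^* )$ is a minimizer of (P).
   Context: The skinny SVD of a matrix $A$ of rank $r$ is $A=U_A\Sigma_AV_A^T$ with $U_A,V_A$ having $r$ orthonormal columns and $\Sigma_A$ an $r\times r$ diagonal matrix with positive diagonal entries. $I$ denotes the identity matrix of the appropriate size. *)

theory Defs
  imports "Jordan_Normal_Form.DL_Rank" "Jordan_Normal_Form.Matrix"
begin

definition rank_mat :: "real mat \<Rightarrow> nat" where
  "rank_mat A = vec_space.rank (dim_row A) A"

definition skinny_svd :: "nat \<Rightarrow> nat \<Rightarrow> nat \<Rightarrow> real mat \<Rightarrow> real mat \<Rightarrow> real mat \<Rightarrow> real mat \<Rightarrow> bool" where
  "skinny_svd m n r A U S V \<longleftrightarrow>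
     A \<in> carrier_mat m n \<and> U \<in> carrier_mat m r \<and> S \<in> carrier_mat r r \<and> V \<in> carrier_mat n r \<and>
     transpose_mat U * U = 1\<^sub>m r \<and> transpose_mat V * V = 1\<^sub>m r \<and>
     diagonal_mat S \<and> (\<forall>i<r. S $$ (i,i) > 0) \<and>
     A = U * S * transpose_mat V"

definition diag_inv :: "real mat \<Rightarrow> real mat" where
  "diag_inv S = mat (dim_row S) (dim_col S) (\<lambda>(i,j). if i = j then 1 / S $$ (i,i) else 0)"

definition rpca_feasible :: "nat \<Rightarrow> nat \<Rightarrow> real mat \<Rightarrow> real mat \<Rightarrow> real mat \<Rightarrow> bool" where
  "rpca_feasible m n X A E \<longleftrightarrow> A \<in> carrier_mat m n \<and> E \<in> carrier_mat m n \<and> X = A + E"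

definition rpca_obj :: "real \<Rightarrow> (real mat \<Rightarrow> real) \<Rightarrow> real mat \<Rightarrow> real mat \<Rightarrow> real" where
  "rpca_obj lam f A E = real (rank_mat A) + lam * f E"

definition rpca_opt :: "nat \<Rightarrow> nat \<Rightarrow> real mat \<Rightarrow> real \<Rightarrow> (real mat \<Rightarrow> real) \<Rightarrow> real mat \<Rightarrow> real mat \<Rightarrow> bool" where
  "rpca_opt m n X lam f A E \<longleftrightarrow> rpca_feasible m n X A E \<and>
     (\<forall>A' E'. rpca_feasible m n X A' E' \<longrightarrow> rpca_obj lam f A E \<le> rpca_obj lam f A' E')"

definition latlrr_feasible :: "nat \<Rightarrow> nat \<Rightarrow> real mat \<Rightarrow> real mat \<Rightarrow> real mat \<Rightarrow> real mat \<Rightarrow> bool" where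
  "latlrr_feasible m n X Z L E \<longleftrightarrow> Z \<in> carrier_mat n n \<and> L \<in> carrier_mat m m \<and> E \<in> carrier_mat m n \<and>
     X - E = (X - E) * Z + L * (X - E)"

definition latlrr_obj :: "real \<Rightarrow> (real mat \<Rightarrow> real) \<Rightarrow> real mat \<Rightarrow> real mat \<Rightarrow> real mat \<Rightarrow> real" where
  "latlrr_obj lam f Z L E = real (rank_mat Z) + real (rank_mat L) + lam * f E"

definition latlrr_opt :: "nat \<Rightarrow> nat \<Rightarrow> real mat \<Rightarrow> real \<Rightarrow> (real mat \<Rightarrow> real) \<Rightarrow> real mat \<Rightarrow> real mat \<Rightarrow> real mat \<Rightarrow> bool" where
  "latlrr_opt m n X lam f Z L E \<longleftrightarrow> latlrr_feasible m n X Z L E \<and>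
     (\<forall>Z' L' E'. latlrr_feasible m n X Z' L' E' \<longrightarrow> latlrr_obj lam f Z L E \<le> latlrr_obj lam f Z' L' E')"

end

theory Submission
  imports Defs
begin

text \<open>
  Both problems have the same optimal value, attained with the same noise term \<open>E\<close>.
  Every feasible \<open>(Z, L, E)\<close> of (T) satisfies
  \<open>rank (X - E) \<le> rank ((X - E) Z) + rank (L (X - E)) \<le> rank Z + rank L\<close>, so it is never better than
  the feasible point \<open>(X - E, E)\<close> of (P); conversely every feasible \<open>(A, E)\<close> of (P) yields the
  feasible point \<open>(0, L, E)\<close> of (T) with \<open>L\<close> a projection onto the column space of \<open>A\<close>, of rank
  \<open>rank A\<close>. This gives (ii). For (i), writing \<open>A* = P Q\<close> with \<open>P = U \<Sigma>\<close>, \<open>Q = V\<^sup>T\<close>, the matrices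
  \<open>Z* = (V + S\<^sub>1) W V\<^sup>T\<close> and \<open>L* = P (I - W) (\<Sigma>\<^sup>-\<^sup>1 U\<^sup>T + S\<^sub>2)\<close> satisfy
  \<open>A* Z* + L* A* = P W Q + P (I - W) Q = A*\<close>, and their ranks are bounded by \<open>rank W\<close> and
  \<open>rank (I - W)\<close>, whose sum is at most \<open>r = rank A*\<close> because \<open>W\<close> is idempotent.
\<close>

lemma assoc_mult_mat_dims:
  "dim_col A = dim_row B \<Longrightarrow> dim_col B = dim_row C \<Longrightarrow> A * B * C = A * (B * C)"
  by (rule assoc_mult_mat[OF carrier_matI carrier_matI carrier_matI]) auto

declare minus_carrier_mat [simp]

context vec_space begin

lemma maximal_lin_indpt_cols_exists:
  "\<exists>S. maximal S (\<lambda>T. T \<subseteq> set (cols A) \<and> lin_indpt T)"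
  using maximal_exists[of "\<lambda>T. T \<subseteq> set (cols A) \<and> lin_indpt T" "card (set (cols A))" "{}"]
  by (meson List.finite_set card_mono empty_iff empty_subsetI finite_lin_indpt2 rev_finite_subset)

lemma rank_le_if_cols_in_span:
  assumes A: "A \<in> carrier_mat n nc" and B: "B \<in> carrier_mat n k"
    and sub: "set (cols A) \<subseteq> span (set (cols B))"
  shows "rank A \<le> k"
proof -
  obtain S where S: "maximal S (\<lambda>T. T \<subseteq> set (cols A) \<and> lin_indpt T)"
    using maximal_lin_indpt_cols_exists by blast
  have SA: "S \<subseteq> set (cols A)" "lin_indpt S" using S unfolding maximal_def by auto
  have fin: "finite S" using SA(1) finite_subset by blast
  have Bc: "set (cols B) \<subseteq> carrier_vec n" using B cols_dim by blast
  have "S \<subseteq> span (set (cols B))" using SA(1) sub by auto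
  from replacement[OF fin _ Bc SA(2) this]
  have "card S \<le> card (set (cols B))" by fastforce
  also have "\<dots> \<le> k" using B by (metis card_length cols_length carrier_matD(2))
  finally show ?thesis using rank_card_indpt[OF A S] by simp
qed

lemma mult_mat_vec_in_span_cols:
  assumes B: "B \<in> carrier_mat n k" and v: "v \<in> carrier_vec k"
  shows "B *\<^sub>v v \<in> span (set (cols B))"
proof -
  have Bc: "set (cols B) \<subseteq> carrier_vec n" using B cols_dim by blast
  have "B *\<^sub>v v = mat_of_cols n (cols B) *\<^sub>v vec (length (cols B)) (\<lambda>i. v $ i)"
    using B v by (intro arg_cong2[where f="(*\<^sub>v)"]) (auto simp: mat_of_cols_cols[of B, simplified])
  also have "\<dots> = lincomb_list (\<lambda>i. v $ i) (cols B)"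
    by (rule lincomb_list_as_mat_mult[symmetric]) (use Bc in auto)
  also have "\<dots> \<in> span_list (cols B)" unfolding span_list_def by auto
  finally show ?thesis using span_list_as_span[OF Bc] by simp
qed

lemma rank_mult_le_inner_dim:
  assumes B: "B \<in> carrier_mat n k" and C: "C \<in> carrier_mat k nc"
  shows "rank (B * C) \<le> k"
proof (rule rank_le_if_cols_in_span[OF _ B])
  show "B * C \<in> carrier_mat n nc" using B C by auto
  show "set (cols (B * C)) \<subseteq> span (set (cols B))"
  proof
    fix x assume "x \<in> set (cols (B * C))"
    then obtain j where j: "j < nc" "x = col (B * C) j" using B C
      by (metis carrier_matD(2) cols_length cols_nth in_set_conv_nth index_mult_mat(3))
    then have "x = B *\<^sub>v col C j" using col_mult2[OF B C j(1)] by simp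
    then show "x \<in> span (set (cols B))" using mult_mat_vec_in_span_cols[OF B, of "col C j"] C j by auto
  qed
qed

text \<open>A basis of the column space, taken among the columns, gives the left factor.\<close>
lemma rank_factorization:
  assumes A: "A \<in> carrier_mat n nc"
  shows "\<exists>B C. B \<in> carrier_mat n (rank A) \<and> C \<in> carrier_mat (rank A) nc \<and> A = B * C \<and>
     (\<forall>v \<in> carrier_vec (rank A). B *\<^sub>v v = 0\<^sub>v n \<longrightarrow> v = 0\<^sub>v (rank A))"
proof -
  obtain S where S: "maximal S (\<lambda>T. T \<subseteq> set (cols A) \<and> lin_indpt T)"
    using maximal_lin_indpt_cols_exists by blast
  define k where "k = rank A"
  have SA: "S \<subseteq> set (cols A)" "lin_indpt S" using S unfolding maximal_def by auto
  have fin: "finite S" using SA(1) finite_subset by blast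
  have Ac: "set (cols A) \<subseteq> carrier_vec n" using A cols_dim by blast
  have Sc: "S \<subseteq> carrier_vec n" using SA(1) Ac by auto
  have cols_in_span: "set (cols A) \<subseteq> span S"
  proof
    fix s assume s: "s \<in> set (cols A)"
    show "s \<in> span S"
    proof (rule ccontr)
      assume ns: "s \<notin> span S"
      have sS: "s \<notin> S" using ns Sc span_mem by blast
      have sc: "s \<in> carrier_vec n" using s Ac by auto
      have "lin_indpt (S \<union> {s})" using lin_dep_iff_in_span[OF Sc SA(2) sc sS] ns by simp
      then have "S = S \<union> {s}" using S SA(1) s unfolding maximal_def by blast
      then show False using sS by auto
    qed
  qed
  obtain ss where ss: "set ss = S" "distinct ss" using finite_distinct_list[OF fin] by blast
  have len: "length ss = k" using rank_card_indpt[OF A S] ss distinct_card unfolding k_def by metis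
  define B where "B = mat_of_cols n ss"
  have Bc: "B \<in> carrier_mat n k" unfolding B_def using len mat_of_cols_carrier(1)[of n ss] by metis
  have colsB: "cols B = ss" unfolding B_def using ss Sc by simp
  have span_ss: "span S = span_list ss" using span_list_as_span[of ss] ss Sc by simp
  have "\<forall>j<nc. \<exists>c. col A j = B *\<^sub>v vec k c"
  proof (intro allI impI)
    fix j assume j: "j < nc"
    have "col A j \<in> set (cols A)" using j A by (metis carrier_matD(2) cols_length cols_nth nth_mem)
    then have "col A j \<in> span_list ss" using cols_in_span span_ss by auto
    then obtain c where "col A j = lincomb_list c ss" by (auto elim: in_span_listE)
    also have "\<dots> = B *\<^sub>v vec k c" unfolding B_def len[symmetric]
      by (rule lincomb_list_as_mat_mult) (use ss Sc in auto)
    finally show "\<exists>c. col A j = B *\<^sub>v vec k c" by blast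
  qed
  then obtain cf where cf: "\<And>j. j < nc \<Longrightarrow> col A j = B *\<^sub>v vec k (cf j)" by metis
  define C where "C = mat k nc (\<lambda>(i, j). cf j i)"
  have Cc: "C \<in> carrier_mat k nc" unfolding C_def by simp
  have "A = B * C"
  proof (rule mat_col_eqI)
    fix j assume "j < dim_col (B * C)"
    then have j: "j < nc" using Cc by simp
    have "col C j = vec k (cf j)" unfolding C_def using j by simp
    then show "col A j = col (B * C) j" using cf[OF j] col_mult2[OF Bc Cc j] by simp
  qed (use A Bc Cc in auto)
  moreover have "\<forall>v \<in> carrier_vec k. B *\<^sub>v v = 0\<^sub>v n \<longrightarrow> v = 0\<^sub>v k"
  proof (intro ballI impI)
    fix v assume v: "v \<in> carrier_vec k" and Bv: "B *\<^sub>v v = 0\<^sub>v n"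
    show "v = 0\<^sub>v k"
    proof (rule ccontr)
      assume "v \<noteq> 0\<^sub>v k"
      from lin_depI[OF Bc v this Bv] colsB ss have "lin_dep S" by simp
      then show False using SA(2) by simp
    qed
  qed
  ultimately show ?thesis using Bc Cc unfolding k_def by blast
qed

end

lemma rank_mat_mult_le_inner_dim:
  assumes "B \<in> carrier_mat m k" "C \<in> carrier_mat k n"
  shows "rank_mat (B * C) \<le> k"
  using vec_space.rank_mult_le_inner_dim[OF assms] assms unfolding rank_mat_def by simp

lemma rank_mat_factorization:
  assumes "A \<in> carrier_mat m n"
  shows "\<exists>B C. B \<in> carrier_mat m (rank_mat A) \<and> C \<in> carrier_mat (rank_mat A) n \<and> A = B * C \<and>
     (\<forall>v \<in> carrier_vec (rank_mat A). B *\<^sub>v v = 0\<^sub>v m \<longrightarrow> v = 0\<^sub>v (rank_mat A))"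
  using vec_space.rank_factorization[OF assms] assms unfolding rank_mat_def by simp

lemma rank_mat_mult_le_left:
  assumes B: "B \<in> carrier_mat m k" and C: "C \<in> carrier_mat k n"
  shows "rank_mat (B * C) \<le> rank_mat B"
proof -
  obtain P Q where P: "P \<in> carrier_mat m (rank_mat B)" and Q: "Q \<in> carrier_mat (rank_mat B) k"
    and "B = P * Q" using rank_mat_factorization[OF B] by blast
  then have "B * C = P * (Q * C)" using C by simp
  then show ?thesis using rank_mat_mult_le_inner_dim[OF P, of "Q * C" n] Q C by simp
qed

lemma rank_mat_mult_le_right:
  assumes B: "B \<in> carrier_mat m k" and C: "C \<in> carrier_mat k n"
  shows "rank_mat (B * C) \<le> rank_mat C"
proof -
  obtain P Q where P: "P \<in> carrier_mat k (rank_mat C)" and Q: "Q \<in> carrier_mat (rank_mat C) n"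
    and "C = P * Q" using rank_mat_factorization[OF C] by blast
  then have "B * C = (B * P) * Q" using B by simp
  then show ?thesis using rank_mat_mult_le_inner_dim[of "B * P" m "rank_mat C" Q n] B P Q by simp
qed

lemma rank_mat_mult3_le_middle:
  assumes "A \<in> carrier_mat m k" "B \<in> carrier_mat k l" "C \<in> carrier_mat l n"
  shows "rank_mat (A * B * C) \<le> rank_mat B"
  using rank_mat_mult_le_left[of "A * B" m l C n] rank_mat_mult_le_right[of A m k B l] assms
  by fastforce

lemma rank_mat_add_le:
  assumes "A \<in> carrier_mat m n" "B \<in> carrier_mat m n"
  shows "rank_mat (A + B) \<le> rank_mat A + rank_mat B"
  using vec_space.rank_subadditive[OF assms] assms unfolding rank_mat_def by simp

lemma rank_mat_zero [simp]: "rank_mat (0\<^sub>m m n) = 0"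
  using vec_space.rank_0I unfolding rank_mat_def by simp

lemma rank_mat_le_dim_col:
  assumes "A \<in> carrier_mat m n"
  shows "rank_mat A \<le> n"
  using vec_space.rank_le_nc[OF assms] assms unfolding rank_mat_def by simp

lemma det_nonzero_iff_rank_mat:
  assumes "A \<in> carrier_mat k k"
  shows "det A \<noteq> 0 \<longleftrightarrow> rank_mat A = k"
  using vec_space.det_rank_iff[OF assms] assms unfolding rank_mat_def by simp

lemma inverse_mat_exists:
  assumes A: "(A :: 'a :: field mat) \<in> carrier_mat k k" and "det A \<noteq> 0"
  shows "\<exists>B \<in> carrier_mat k k. B * A = 1\<^sub>m k \<and> A * B = 1\<^sub>m k"
proof -
  obtain B where B: "B \<in> carrier_mat k k" "B * A = 1\<^sub>m k"
    using det_non_zero_imp_unit[OF assms, of "()"] unfolding Units_def ring_mat_def by auto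
  then show ?thesis using mat_mult_left_right_inverse[OF B(1) A B(2)] by blast
qed

lemma mult_eq_zero_cancel_nonsingular:
  assumes G: "(G :: 'a :: field mat) \<in> carrier_mat a a" and H: "H \<in> carrier_mat b b"
    and M: "M \<in> carrier_mat a b" and "det G \<noteq> 0" "det H \<noteq> 0" and GMH: "G * M * H = 0\<^sub>m a b"
  shows "M = 0\<^sub>m a b"
proof -
  obtain Gi where Gi: "Gi \<in> carrier_mat a a" "Gi * G = 1\<^sub>m a"
    using inverse_mat_exists[OF G] assms(4) by blast
  obtain Hi where Hi: "Hi \<in> carrier_mat b b" "H * Hi = 1\<^sub>m b"
    using inverse_mat_exists[OF H] assms(5) by blast
  have "M = (Gi * G) * M * (H * Hi)" using Gi(2) Hi(2) M by simp
  also have "\<dots> = Gi * (G * M * H) * Hi" using Gi(1) Hi(1) G H M by (simp add: assoc_mult_mat_dims)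
  finally show ?thesis using GMH Gi Hi by simp
qed

text \<open>For an idempotent \<open>M = P Q\<close> of rank \<open>a\<close> the core \<open>Q P\<close> is nonsingular, since
  \<open>M = P (Q P) Q\<close> forces \<open>a \<le> rank (Q P)\<close>.\<close>
lemma det_core_of_idempotent_factorization:
  assumes M: "M \<in> carrier_mat r r" and idem: "M * M = M"
    and P: "P \<in> carrier_mat r a" and Q: "Q \<in> carrier_mat a r" and MPQ: "M = P * Q"
    and rank: "rank_mat M = a"
  shows "det (Q * P) \<noteq> 0"
proof -
  have QP: "Q * P \<in> carrier_mat a a" using P Q by simp
  have "M = P * (Q * P) * Q" using idem P Q unfolding MPQ by (simp add: assoc_mult_mat_dims)
  then have "a \<le> rank_mat (Q * P)" using rank_mat_mult3_le_middle[OF P QP Q] rank by simp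
  then show ?thesis using rank_mat_le_dim_col[OF QP] det_nonzero_iff_rank_mat[OF QP] by simp
qed

text \<open>With \<open>W = P Q\<close> and \<open>I - W = P' Q'\<close> rank factorizations, \<open>(Q @ Q') (P | P')\<close> is block
  upper triangular with nonsingular diagonal blocks, hence a nonsingular square matrix of size
  \<open>rank W + rank (I - W)\<close> factoring through \<open>r\<close>.\<close>
lemma rank_mat_idempotent_add_complement_le:
  assumes W: "(W :: real mat) \<in> carrier_mat r r" and idem: "W * W = W"
  shows "rank_mat W + rank_mat (1\<^sub>m r - W) \<le> r"
proof -
  define a where "a = rank_mat W"
  define b where "b = rank_mat (1\<^sub>m r - W)"
  have I: "(1\<^sub>m r :: real mat) \<in> carrier_mat r r" by simp
  have IW: "1\<^sub>m r - W \<in> carrier_mat r r" using W by simp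
  have IWW: "(1\<^sub>m r - W) * W = 0\<^sub>m r r"
    using minus_mult_distrib_mat[OF I W W] idem W by simp
  have "(1\<^sub>m r - W) * (1\<^sub>m r - W) = (1\<^sub>m r - W) - 0\<^sub>m r r"
    using mult_minus_distrib_mat[OF IW I W] IWW right_mult_one_mat[OF IW] by simp
  then have idem': "(1\<^sub>m r - W) * (1\<^sub>m r - W) = 1\<^sub>m r - W" using W by (auto intro!: eq_matI)
  obtain P Q where P: "P \<in> carrier_mat r a" and Q: "Q \<in> carrier_mat a r" and WPQ: "W = P * Q"
    using rank_mat_factorization[OF W] unfolding a_def by blast
  obtain P' Q' where P': "P' \<in> carrier_mat r b" and Q': "Q' \<in> carrier_mat b r"
    and WPQ': "1\<^sub>m r - W = P' * Q'"
    using rank_mat_factorization[OF IW] unfolding b_def by blast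
  have QP: "Q * P \<in> carrier_mat a a" and Q'P': "Q' * P' \<in> carrier_mat b b"
    and Q'P: "Q' * P \<in> carrier_mat b a" using P Q P' Q' by auto
  have dG: "det (Q * P) \<noteq> 0"
    using det_core_of_idempotent_factorization[OF W idem P Q WPQ] a_def by simp
  have dH: "det (Q' * P') \<noteq> 0"
    using det_core_of_idempotent_factorization[OF IW idem' P' Q' WPQ'] b_def by simp
  have "(Q' * P') * (Q' * P) * (Q * P) = Q' * ((P' * Q') * (P * Q)) * P"
    using P Q P' Q' by (simp add: assoc_mult_mat_dims)
  also have "\<dots> = 0\<^sub>m b a" using IWW P Q' by (simp flip: WPQ WPQ')
  finally have "(Q' * P') * (Q' * P) * (Q * P) = 0\<^sub>m b a" .
  then have lower_left: "Q' * P = 0\<^sub>m b a"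
    using mult_eq_zero_cancel_nonsingular[OF Q'P' QP Q'P dH dG] by simp
  define M1 where "M1 = four_block_mat Q (0\<^sub>m a 0) Q' (0\<^sub>m b 0)"
  define M2 where "M2 = four_block_mat P P' (0\<^sub>m 0 a) (0\<^sub>m 0 b)"
  have M1: "M1 \<in> carrier_mat (a + b) r" unfolding M1_def using Q Q' by auto
  have M2: "M2 \<in> carrier_mat r (a + b)" unfolding M2_def using P P' by auto
  have "M1 * M2 = four_block_mat (Q * P + 0\<^sub>m a 0 * 0\<^sub>m 0 a) (Q * P' + 0\<^sub>m a 0 * 0\<^sub>m 0 b)
      (Q' * P + 0\<^sub>m b 0 * 0\<^sub>m 0 a) (Q' * P' + 0\<^sub>m b 0 * 0\<^sub>m 0 b)"
    unfolding M1_def M2_def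
    by (rule mult_four_block_mat[OF Q zero_carrier_mat Q' zero_carrier_mat P P' zero_carrier_mat zero_carrier_mat])
  also have "\<dots> = four_block_mat (Q * P) (Q * P') (0\<^sub>m b a) (Q' * P')"
    using lower_left P P' Q Q' by simp
  finally have "det (M1 * M2) = det (Q * P) * det (Q' * P')"
    using det_four_block_mat_lower_left_zero[OF QP _ refl Q'P'] P' Q by simp
  then have "rank_mat (M1 * M2) = a + b"
    using det_nonzero_iff_rank_mat[of "M1 * M2" "a + b"] M1 M2 dG dH by simp
  then show ?thesis
    using rank_mat_mult_le_inner_dim[OF M1 M2] unfolding a_def b_def by simp
qed

lemma det_gram_mat_nonzero:
  assumes B: "(B :: real mat) \<in> carrier_mat m k"
    and inj: "\<forall>v \<in> carrier_vec k. B *\<^sub>v v = 0\<^sub>v m \<longrightarrow> v = 0\<^sub>v k"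
  shows "det (transpose_mat B * B) \<noteq> 0"
proof
  assume "det (transpose_mat B * B) = 0"
  then obtain v where v: "v \<in> carrier_vec k" "v \<noteq> 0\<^sub>v k" "(transpose_mat B * B) *\<^sub>v v = 0\<^sub>v k"
    using det_0_iff_vec_prod_zero_field[of "transpose_mat B * B" k] B by auto
  define w where "w = B *\<^sub>v v"
  have w: "w \<in> carrier_vec m" unfolding w_def using B v by simp
  have "w \<bullet> w = (transpose_mat B *\<^sub>v w) \<bullet> v"
    using transpose_vec_mult_scalar[OF B v(1) w] unfolding w_def by simp
  also have "\<dots> = 0" using v B unfolding w_def by simp
  finally have "(\<Sum>i\<in>{0..<m}. w $ i * w $ i) = 0" using w unfolding scalar_prod_def by simp
  then have "w = 0\<^sub>v m" using w by (intro eq_vecI) (auto simp: sum_nonneg_eq_0_iff)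
  then show False using inj v unfolding w_def by auto
qed

text \<open>From \<open>A = B C\<close> with \<open>B\<close> injective, \<open>L = B (B\<^sup>T B)\<^sup>-\<^sup>1 B\<^sup>T\<close> fixes the columns of \<open>A\<close>.\<close>
lemma left_projector_exists:
  assumes A: "(A :: real mat) \<in> carrier_mat m n"
  shows "\<exists>L \<in> carrier_mat m m. L * A = A \<and> rank_mat L \<le> rank_mat A"
proof -
  define k where "k = rank_mat A"
  obtain B C where B: "B \<in> carrier_mat m k" and C: "C \<in> carrier_mat k n" and ABC: "A = B * C"
    and inj: "\<forall>v \<in> carrier_vec k. B *\<^sub>v v = 0\<^sub>v m \<longrightarrow> v = 0\<^sub>v k"
    using rank_mat_factorization[OF A] unfolding k_def by blast
  obtain G where G: "G \<in> carrier_mat k k" "G * (transpose_mat B * B) = 1\<^sub>m k"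
    using inverse_mat_exists[of "transpose_mat B * B" k] det_gram_mat_nonzero[OF B inj] B by auto
  define L where "L = B * (G * transpose_mat B)"
  have "L * A = B * (G * (transpose_mat B * B)) * C"
    unfolding L_def ABC using B C G(1) by (simp add: assoc_mult_mat_dims)
  then have "L * A = A" using G(2) B C ABC by simp
  moreover have "rank_mat L \<le> k"
    unfolding L_def using rank_mat_mult_le_inner_dim[OF B, of "G * transpose_mat B" m] B G by simp
  moreover have "L \<in> carrier_mat m m" unfolding L_def using B G by simp
  ultimately show ?thesis unfolding k_def by blast
qed

lemma latlrr_feasible_rank_le:
  assumes X: "X \<in> carrier_mat m n" and feas: "latlrr_feasible m n X Z L E"
  shows "rank_mat (X - E) \<le> rank_mat Z + rank_mat L"
proof -
  have Z: "Z \<in> carrier_mat n n" and L: "L \<in> carrier_mat m m" and E: "E \<in> carrier_mat m n"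
    and eq: "X - E = (X - E) * Z + L * (X - E)" using feas unfolding latlrr_feasible_def by auto
  have D: "X - E \<in> carrier_mat m n" using E by simp
  have "rank_mat (X - E) \<le> rank_mat ((X - E) * Z) + rank_mat (L * (X - E))"
    using rank_mat_add_le[of "(X - E) * Z" m n "L * (X - E)"] D Z L eq by simp
  then show ?thesis using rank_mat_mult_le_right[OF D Z] rank_mat_mult_le_left[OF L D] by simp
qed

lemma rpca_feasible_diff:
  assumes "X \<in> carrier_mat m n" "E \<in> carrier_mat m n"
  shows "rpca_feasible m n X (X - E) E"
  unfolding rpca_feasible_def using assms by (auto intro!: eq_matI)

lemma latlrr_feasible_of_rpca_feasible:
  assumes "rpca_feasible m n X A E"
  obtains L where "latlrr_feasible m n X (0\<^sub>m n n) L E" "rank_mat L \<le> rank_mat A"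
proof -
  have A: "A \<in> carrier_mat m n" and E: "E \<in> carrier_mat m n" and X: "X = A + E"
    using assms unfolding rpca_feasible_def by auto
  obtain L where L: "L \<in> carrier_mat m m" "L * A = A" "rank_mat L \<le> rank_mat A"
    using left_projector_exists[OF A] by blast
  have "X - E = A" unfolding X using A E by (intro eq_matI) auto
  then have "latlrr_feasible m n X (0\<^sub>m n n) L E"
    unfolding latlrr_feasible_def using A E L by simp
  then show ?thesis using that L(3) by blast
qed

lemma latlrr_opt_if_rank_le:
  assumes X: "X \<in> carrier_mat m n" and opt: "rpca_opt m n X lam f A E"
    and feas: "latlrr_feasible m n X Z L E" and rank: "rank_mat Z + rank_mat L \<le> rank_mat A"
  shows "latlrr_opt m n X lam f Z L E"
  unfolding latlrr_opt_def
proof (intro conjI feas allI impI)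
  fix Z' L' E' assume feas': "latlrr_feasible m n X Z' L' E'"
  then have "rpca_feasible m n X (X - E') E'"
    using rpca_feasible_diff[OF X] unfolding latlrr_feasible_def by blast
  then have "rpca_obj lam f A E \<le> rpca_obj lam f (X - E') E'" using opt unfolding rpca_opt_def by blast
  then show "latlrr_obj lam f Z L E \<le> latlrr_obj lam f Z' L' E'"
    using latlrr_feasible_rank_le[OF X feas'] rank
    unfolding latlrr_obj_def rpca_obj_def by linarith
qed

lemma rpca_opt_if_latlrr_opt:
  assumes X: "X \<in> carrier_mat m n" and opt: "latlrr_opt m n X lam f Z L E"
  shows "rpca_opt m n X lam f (X - E) E"
  unfolding rpca_opt_def
proof (intro conjI allI impI)
  have feas: "latlrr_feasible m n X Z L E" using opt unfolding latlrr_opt_def by blast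
  then show "rpca_feasible m n X (X - E) E"
    using rpca_feasible_diff[OF X] unfolding latlrr_feasible_def by blast
  fix A' E' assume "rpca_feasible m n X A' E'"
  then obtain L' where feas': "latlrr_feasible m n X (0\<^sub>m n n) L' E'" and "rank_mat L' \<le> rank_mat A'"
    by (rule latlrr_feasible_of_rpca_feasible)
  moreover have "latlrr_obj lam f Z L E \<le> latlrr_obj lam f (0\<^sub>m n n) L' E'"
    using opt feas' unfolding latlrr_opt_def by blast
  ultimately show "rpca_obj lam f (X - E) E \<le> rpca_obj lam f A' E'"
    using latlrr_feasible_rank_le[OF X feas]
    unfolding latlrr_obj_def rpca_obj_def by simp
qed

lemma factorization_split_by_idempotent:
  fixes P :: "'a :: comm_ring_1 mat"
  assumes P: "P \<in> carrier_mat m r" and Q: "Q \<in> carrier_mat r n"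
    and V: "V \<in> carrier_mat n r" and K: "K \<in> carrier_mat r m" and W: "W \<in> carrier_mat r r"
    and S1: "S1 \<in> carrier_mat n r" and S2: "S2 \<in> carrier_mat r m"
    and QV: "Q * V = 1\<^sub>m r" and KP: "K * P = 1\<^sub>m r" and QS1: "Q * S1 = 0\<^sub>m r r" and S2P: "S2 * P = 0\<^sub>m r r"
  shows "(P * Q) * ((V + S1) * W * Q) + (P * (1\<^sub>m r - W) * (K + S2)) * (P * Q) = P * Q"
proof -
  have "(P * Q) * ((V + S1) * W * Q) = P * (Q * (V + S1)) * W * Q"
    using P Q V S1 W by (simp add: assoc_mult_mat_dims)
  also have "Q * (V + S1) = 1\<^sub>m r" using mult_add_distrib_mat[OF Q V S1] QV QS1 by simp
  finally have "(P * Q) * ((V + S1) * W * Q) = P * W * Q" using right_mult_one_mat[OF P] by simp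
  moreover have "(P * (1\<^sub>m r - W) * (K + S2)) * (P * Q) = P * (1\<^sub>m r - W) * ((K + S2) * P) * Q"
    using P Q K S2 W by (simp add: assoc_mult_mat_dims)
  moreover have "(K + S2) * P = 1\<^sub>m r" using add_mult_distrib_mat[OF K S2 P] KP S2P by simp
  moreover have "P * W * Q + P * (1\<^sub>m r - W) * Q = (P * W + P * (1\<^sub>m r - W)) * Q"
    using add_mult_distrib_mat[of "P * W" m r "P * (1\<^sub>m r - W)" Q n] P Q W by simp
  moreover have "P * W + P * (1\<^sub>m r - W) = P * (W + (1\<^sub>m r - W))"
    using mult_add_distrib_mat[of P m r W r "1\<^sub>m r - W"] P W by simp
  moreover have "W + (1\<^sub>m r - W) = 1\<^sub>m r" using W by (intro eq_matI) auto
  ultimately show ?thesis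
    using right_mult_one_mat[OF P] right_mult_one_mat[of "P * (1\<^sub>m r - W)" m r] P W by simp
qed

lemma diag_inv_mult_self:
  assumes S: "S \<in> carrier_mat r r" and "diagonal_mat S" and "\<forall>i<r. S $$ (i, i) > 0"
  shows "diag_inv S * S = 1\<^sub>m r"
proof (rule eq_matI)
  fix i j assume "i < dim_row (1\<^sub>m r :: real mat)" "j < dim_col (1\<^sub>m r :: real mat)"
  then have i: "i < r" and j: "j < r" by auto
  have "(diag_inv S * S) $$ (i, j) = (\<Sum>k\<in>{0..<r}. diag_inv S $$ (i, k) * S $$ (k, j))"
    using S i j unfolding diag_inv_def by (simp add: scalar_prod_def)
  also have "\<dots> = (\<Sum>k\<in>{0..<r}. if k = i then S $$ (i, j) / S $$ (i, i) else 0)"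
    using S i unfolding diag_inv_def by (intro sum.cong) auto
  also have "\<dots> = S $$ (i, j) / S $$ (i, i)" using i by simp
  also have "\<dots> = 1\<^sub>m r $$ (i, j)" using assms i j unfolding diagonal_mat_def by auto
  finally show "(diag_inv S * S) $$ (i, j) = 1\<^sub>m r $$ (i, j)" .
qed (use S in \<open>auto simp: diag_inv_def\<close>)

lemma latlrr_opt_of_skinny_svd:
  assumes X: "X \<in> carrier_mat m n" and opt: "rpca_opt m n X lam f A E"
    and svd: "skinny_svd m n (rank_mat A) A U S V"
    and W: "W \<in> carrier_mat (rank_mat A) (rank_mat A)" and idem: "W * W = W"
    and S1: "S1 \<in> carrier_mat n (rank_mat A)" and S2: "S2 \<in> carrier_mat (rank_mat A) m"
    and VS1: "transpose_mat V * S1 = 0\<^sub>m (rank_mat A) (rank_mat A)"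
    and S2U: "S2 * U = 0\<^sub>m (rank_mat A) (rank_mat A)"
  shows "latlrr_opt m n X lam f
           (V * W * transpose_mat V + S1 * W * transpose_mat V)
           (U * S * (1\<^sub>m (rank_mat A) - W) * diag_inv S * transpose_mat U
              + U * S * (1\<^sub>m (rank_mat A) - W) * S2)
           E"
proof -
  let ?r = "rank_mat A" and ?IW = "1\<^sub>m (rank_mat A) - W"
  let ?P = "U * S" and ?Q = "transpose_mat V" and ?K = "diag_inv S * transpose_mat U"
  have U: "U \<in> carrier_mat m ?r" and S: "S \<in> carrier_mat ?r ?r" and V: "V \<in> carrier_mat n ?r"
    and A: "A = ?P * ?Q" and QV: "?Q * V = 1\<^sub>m ?r"
    using svd unfolding skinny_svd_def by auto
  have P: "?P \<in> carrier_mat m ?r" and Q: "?Q \<in> carrier_mat ?r n" using U S V by auto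
  have Si: "diag_inv S \<in> carrier_mat ?r ?r" using S by (simp add: diag_inv_def)
  have K: "?K \<in> carrier_mat ?r m" using Si U by simp
  have "?K * ?P = diag_inv S * (transpose_mat U * U) * S" using Si U S by (simp add: assoc_mult_mat_dims)
  then have KP: "?K * ?P = 1\<^sub>m ?r"
    using svd diag_inv_mult_self[OF S] Si unfolding skinny_svd_def by simp
  have "S2 * ?P = (S2 * U) * S" using S2 U S by (simp add: assoc_mult_mat_dims)
  then have S2P: "S2 * ?P = 0\<^sub>m ?r ?r" using S2U S by simp
  have Z: "V * W * ?Q + S1 * W * ?Q = (V + S1) * W * ?Q"
    using add_mult_distrib_mat[of "V * W" n ?r "S1 * W" ?Q n] add_mult_distrib_mat[OF V S1 W] V S1 W
    by simp
  have PIW: "?P * ?IW \<in> carrier_mat m ?r" using P W by simp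
  have "U * S * ?IW * diag_inv S * transpose_mat U = ?P * ?IW * ?K"
    using U S W Si by (simp add: assoc_mult_mat_dims)
  then have L: "U * S * ?IW * diag_inv S * transpose_mat U + U * S * ?IW * S2 = ?P * ?IW * (?K + S2)"
    using mult_add_distrib_mat[OF PIW K S2] by simp
  have "A * ((V + S1) * W * ?Q) + (?P * ?IW * (?K + S2)) * A = A"
    using factorization_split_by_idempotent[OF P Q V K W S1 S2 QV KP VS1 S2P] unfolding A .
  moreover have "X - E = A"
    using opt P Q unfolding rpca_opt_def rpca_feasible_def A by (auto intro!: eq_matI)
  moreover have "(V + S1) * W * ?Q \<in> carrier_mat n n"
    using mult_carrier_mat[OF mult_carrier_mat[OF add_carrier_mat[OF S1] W] Q] .
  moreover have "?P * ?IW * (?K + S2) \<in> carrier_mat m m" using PIW K S2 by simp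
  ultimately have feas: "latlrr_feasible m n X ((V + S1) * W * ?Q) (?P * ?IW * (?K + S2)) E"
    using opt unfolding latlrr_feasible_def rpca_opt_def rpca_feasible_def by auto
  have "rank_mat ((V + S1) * W * ?Q) + rank_mat (?P * ?IW * (?K + S2)) \<le> rank_mat W + rank_mat ?IW"
    using rank_mat_mult3_le_middle[of "V + S1" n ?r W ?r ?Q n]
      rank_mat_mult3_le_middle[of ?P m ?r ?IW ?r "?K + S2" m] U S V W K S1 S2 by simp
  also have "\<dots> \<le> ?r" by (rule rank_mat_idempotent_add_complement_le[OF W idem])
  finally show ?thesis unfolding Z L using latlrr_opt_if_rank_le[OF X opt feas] by simp
qed

theorem theorem3:
  fixes m n :: nat and X :: "real mat" and lam :: real and f :: "real mat \<Rightarrow> real"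
  assumes X: "X \<in> carrier_mat m n"
    and lam: "lam > 0"
  shows "(\<forall>A E U S V W S1 S2.
            rpca_opt m n X lam f A E \<longrightarrow>
            skinny_svd m n (rank_mat A) A U S V \<longrightarrow>
            W \<in> carrier_mat (rank_mat A) (rank_mat A) \<longrightarrow> W * W = W \<longrightarrow>
            S1 \<in> carrier_mat n (rank_mat A) \<longrightarrow> S2 \<in> carrier_mat (rank_mat A) m \<longrightarrow>
            transpose_mat V * S1 = 0\<^sub>m (rank_mat A) (rank_mat A) \<longrightarrow>
            S2 * U = 0\<^sub>m (rank_mat A) (rank_mat A) \<longrightarrow>
            rank_mat S1 \<le> rank_mat W \<longrightarrow>
            rank_mat S2 \<le> rank_mat (1\<^sub>m (rank_mat A) - W) \<longrightarrow>
            latlrr_opt m n X lam f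
              (V * W * transpose_mat V + S1 * W * transpose_mat V)
              (U * S * (1\<^sub>m (rank_mat A) - W) * diag_inv S * transpose_mat U
                 + U * S * (1\<^sub>m (rank_mat A) - W) * S2)
              E)
       \<and> (\<forall>Z L E. latlrr_opt m n X lam f Z L E \<longrightarrow> rpca_opt m n X lam f (X - E) E)"
  using latlrr_opt_of_skinny_svd[OF X] rpca_opt_if_latlrr_opt[OF X] by blast

end
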